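(* Let $k$ be a positive integer, $a_1>a_2>\cdots>a_n$ real numbers in $[a,b]$, and $w_1,\dots,w_n$ real weights such that $\sum_{i=1}^n w_ia_i^j=0$ for all integers $0\le j<k$ and \[ \sum_{i=1}^j w_i(a_i-a_{j+1})(a_i-a_{j+2})\cdots(a_i-a_{j+k-1})\ge 0\quad\text{for all }1\le j\le n-k \] (the product has $k-1$ factors; it is empty, i.e. equal to $1$, when $k=1$). Then $\sum_{i=1}^n w_if(a_i)\ge 0$ for every $k$ times differentiable $f:[a,b]\to\mathbb{R}$ with $f^{(k)}\ge 0$. *)

theory Defs
  imports "HOL-Analysis.Analysis"
begin

end

theory Submission
  imports Defs
begin

(* The basic positive functional is the divided difference of order k on nodes
   y_0 > y_1 > ... > y_k,
       divdiff f y k = \<Sum>i f(y_i) / \<Prod>(l \<noteq> i) (y_i - y_l).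
   Applying Rolle's theorem k times to f minus its interpolating polynomial gives the
   mean value theorem  divdiff f y k = f^(k)(\<xi>) / k!;  hence divdiff f y k \<ge> 0 when
   f^(k) \<ge> 0, and divdiff vanishes on polynomials of degree < k.

   The theorem follows by induction on the number n of nodes.  If n \<le> k, the moment
   conditions force every weight to vanish.  Otherwise the first node is "peeled off":
   subtracting c \<cdot> divdiff(-, x_1..x_{k+1}), with the constant c \<ge> 0 chosen to cancel w_1,
   leaves a weight system on x_2..x_n that again has vanishing moments and nonnegative
   partial sums, so the induction hypothesis applies to it. *)

lemma higher_pderiv_degree_le:
  fixes p :: "real poly"
  assumes "degree p \<le> m"
  shows "(pderiv ^^ m) p = [:fact m * coeff p m:]"
proof -
  have "degree ((pderiv ^^ m) p) = 0" using assms by (simp add: degree_higher_pderiv)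
  then have "(pderiv ^^ m) p = [:coeff ((pderiv ^^ m) p) 0:]" by (simp add: degree_0_id)
  also have "coeff ((pderiv ^^ m) p) 0 = fact m * coeff p m"
    by (simp add: coeff_higher_pderiv pochhammer_fact)
  finally show ?thesis .
qed

lemma rolle_within:
  fixes g g' :: "real \<Rightarrow> real"
  assumes deriv: "\<And>t. t \<in> {a..b} \<Longrightarrow> (g has_real_derivative g' t) (at t within {a..b})"
    and uv: "u < v" "u \<in> {a..b}" "v \<in> {a..b}" and eq: "g u = g v"
  shows "\<exists>\<zeta>. u < \<zeta> \<and> \<zeta> < v \<and> g' \<zeta> = 0"
proof -
  have sub: "{u..v} \<subseteq> {a..b}" using uv by auto
  have interior_deriv: "(g has_real_derivative g' t) (at t)" if "u < t" "t < v" for t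
  proof -
    have "a < t" "t < b" using that uv by auto
    then show ?thesis using deriv[of t] at_within_Icc_at[of a t b] by auto
  qed
  have cont: "continuous_on {u..v} g"
    using DERIV_continuous_on[of "{u..v}" g g'] DERIV_subset[OF deriv sub] sub by blast
  obtain \<zeta> where \<zeta>: "u < \<zeta>" "\<zeta> < v" "DERIV g \<zeta> :> 0"
    using Rolle[OF uv(1) eq cont] interior_deriv real_differentiable_def by blast
  then show ?thesis using interior_deriv DERIV_unique by blast
qed

definition descending_zeros :: "(real \<Rightarrow> real) \<Rightarrow> real set \<Rightarrow> nat \<Rightarrow> bool" where
  "descending_zeros g S p \<longleftrightarrow>
     (\<exists>z. (\<forall>i\<le>p. z i \<in> S \<and> g (z i) = 0) \<and> (\<forall>i<p. z (Suc i) < z i))"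

lemma rolle_zeros_step:
  fixes g g' :: "real \<Rightarrow> real"
  assumes deriv: "\<And>t. t \<in> {a..b} \<Longrightarrow> (g has_real_derivative g' t) (at t within {a..b})"
    and zeros: "descending_zeros g {a..b} (Suc p)"
  shows "descending_zeros g' {a..b} p"
proof -
  obtain z where zin: "\<And>i. i \<le> Suc p \<Longrightarrow> z i \<in> {a..b}"
    and zero: "\<And>i. i \<le> Suc p \<Longrightarrow> g (z i) = 0"
    and zdesc: "\<And>i. i < Suc p \<Longrightarrow> z (Suc i) < z i"
    using zeros unfolding descending_zeros_def by blast
  have "\<exists>\<zeta>. z (Suc i) < \<zeta> \<and> \<zeta> < z i \<and> g' \<zeta> = 0" if "i \<le> p" for i
    using that zin[of i] zin[of "Suc i"] by (intro rolle_within[OF deriv]) (auto intro: zdesc simp: zero)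
  then obtain \<zeta> where \<zeta>: "\<And>i. i \<le> p \<Longrightarrow> z (Suc i) < \<zeta> i \<and> \<zeta> i < z i \<and> g' (\<zeta> i) = 0"
    by metis
  have "\<zeta> i \<in> {a..b}" if "i \<le> p" for i
    using \<zeta>[OF that] zin[of i] zin[of "Suc i"] that by auto
  moreover have "\<zeta> (Suc i) < \<zeta> i" if "i < p" for i
    using \<zeta>[of i] \<zeta>[of "Suc i"] that by fastforce
  ultimately show ?thesis unfolding descending_zeros_def using \<zeta> by blast
qed

lemma rolle_iterated:
  fixes H :: "nat \<Rightarrow> real \<Rightarrow> real"
  assumes deriv: "\<And>m t. m < k \<Longrightarrow> t \<in> {a..b} \<Longrightarrow>
      (H m has_real_derivative H (Suc m) t) (at t within {a..b})"
    and zeros: "descending_zeros (H 0) {a..b} k"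
  shows "\<exists>\<xi>\<in>{a..b}. H k \<xi> = 0"
proof -
  have "descending_zeros (H m) {a..b} (k - m)" if "m \<le> k" for m
    using that
  proof (induction m)
    case 0 then show ?case using zeros by simp
  next
    case (Suc m)
    then have "descending_zeros (H m) {a..b} (Suc (k - Suc m))"
      by (simp add: Suc_diff_Suc)
    then show ?case using Suc.prems by (intro rolle_zeros_step[OF deriv]) auto
  qed
  from this[of k] show ?thesis unfolding descending_zeros_def by auto
qed

definition node_prod :: "(nat \<Rightarrow> real) \<Rightarrow> nat \<Rightarrow> nat \<Rightarrow> real" where
  "node_prod y k i = (\<Prod>l\<in>{0..k}-{i}. y i - y l)"

definition node_poly :: "(nat \<Rightarrow> real) \<Rightarrow> nat \<Rightarrow> nat \<Rightarrow> real poly" where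
  "node_poly y k i = (\<Prod>l\<in>{0..k}-{i}. [:- y l, 1:])"

definition divdiff :: "(real \<Rightarrow> real) \<Rightarrow> (nat \<Rightarrow> real) \<Rightarrow> nat \<Rightarrow> real" where
  "divdiff g y k = (\<Sum>i=0..k. g (y i) / node_prod y k i)"

definition interpolant :: "(real \<Rightarrow> real) \<Rightarrow> (nat \<Rightarrow> real) \<Rightarrow> nat \<Rightarrow> real poly" where
  "interpolant g y k = (\<Sum>i=0..k. smult (g (y i) / node_prod y k i) (node_poly y k i))"

lemma poly_node_poly: "poly (node_poly y k i) t = (\<Prod>l\<in>{0..k}-{i}. t - y l)"
  unfolding node_poly_def poly_prod by simp

lemma node_poly_monic:
  assumes "i \<le> k"
  shows "degree (node_poly y k i) = k" and "coeff (node_poly y k i) k = 1"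
proof -
  show deg: "degree (node_poly y k i) = k"
    unfolding node_poly_def using assms by (subst degree_prod_eq_sum_degree) auto
  have "lead_coeff (node_poly y k i) = 1"
    unfolding node_poly_def lead_coeff_prod by simp
  then show "coeff (node_poly y k i) k = 1" using deg by simp
qed

lemma node_prod_nonzero:
  assumes "inj_on y {0..k}" "i \<le> k"
  shows "node_prod y k i \<noteq> 0"
  using assms unfolding node_prod_def by (auto simp: inj_on_def)

lemma poly_interpolant_node:
  assumes inj: "inj_on y {0..k}" and j: "j \<le> k"
  shows "poly (interpolant g y k) (y j) = g (y j)"
proof -
  have "poly (interpolant g y k) (y j) =
      (\<Sum>i=0..k. g (y i) / node_prod y k i * (\<Prod>l\<in>{0..k}-{i}. y j - y l))"
    unfolding interpolant_def poly_sum by (simp add: poly_node_poly)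
  also have "\<dots> = (\<Sum>i=0..k. if i = j then g (y j) else 0)"
  proof (rule sum.cong)
    fix i assume i: "i \<in> {0..k}"
    show "g (y i) / node_prod y k i * (\<Prod>l\<in>{0..k}-{i}. y j - y l) = (if i = j then g (y j) else 0)"
    proof (cases "i = j")
      case True
      then show ?thesis using node_prod_nonzero[OF inj j] by (simp add: node_prod_def)
    next
      case False
      then have "(\<Prod>l\<in>{0..k}-{i}. y j - y l) = 0" using j by (intro prod_zero) auto
      then show ?thesis using False by simp
    qed
  qed simp
  also have "\<dots> = g (y j)" using j by simp
  finally show ?thesis .
qed

(* The leading coefficient of the interpolant is the divided difference. *)
lemma higher_pderiv_interpolant:
  "(pderiv ^^ k) (interpolant g y k) = [:fact k * divdiff g y k:]"
proof -
  have "degree (interpolant g y k) \<le> k"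
    unfolding interpolant_def
    by (intro degree_sum_le) (auto intro: order.trans[OF degree_smult_le] simp: node_poly_monic)
  moreover have "coeff (interpolant g y k) k = divdiff g y k"
    unfolding interpolant_def divdiff_def coeff_sum by (simp add: node_poly_monic)
  ultimately show ?thesis by (simp add: higher_pderiv_degree_le)
qed

lemma descending_inj_on:
  fixes y :: "nat \<Rightarrow> real"
  assumes "\<And>i j. i \<in> A \<Longrightarrow> j \<in> A \<Longrightarrow> i < j \<Longrightarrow> y j < y i"
  shows "inj_on y A"
  by (intro inj_onI) (metis assms less_irrefl linorder_neq_iff)

(* Mean value theorem for divided differences: f - interpolant vanishes at the k + 1
   nodes, so its k-th derivative D k - k! \<cdot> divdiff f y k has a zero. *)
lemma divdiff_mean_value:
  fixes D :: "nat \<Rightarrow> real \<Rightarrow> real" and y :: "nat \<Rightarrow> real"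
  assumes D0: "\<And>t. t \<in> {a..b} \<Longrightarrow> D 0 t = f t"
    and Dderiv: "\<And>m t. m < k \<Longrightarrow> t \<in> {a..b} \<Longrightarrow>
        (D m has_real_derivative D (Suc m) t) (at t within {a..b})"
    and ydesc: "\<And>i j. i < j \<Longrightarrow> j \<le> k \<Longrightarrow> y j < y i"
    and yin: "\<And>i. i \<le> k \<Longrightarrow> y i \<in> {a..b}"
  shows "\<exists>\<xi>\<in>{a..b}. D k \<xi> = fact k * divdiff f y k"
proof -
  define P where "P = interpolant f y k"
  define H where "H m t = D m t - poly ((pderiv ^^ m) P) t" for m t
  have Hderiv: "(H m has_real_derivative H (Suc m) t) (at t within {a..b})"
    if "m < k" "t \<in> {a..b}" for m t
    unfolding H_def
    by (intro DERIV_diff Dderiv that) (simp add: has_field_derivative_at_within poly_DERIV)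
  have inj: "inj_on y {0..k}" by (rule descending_inj_on) (use ydesc in auto)
  have "H 0 (y i) = 0" if "i \<le> k" for i
    using poly_interpolant_node[OF inj that] D0 yin that by (simp add: H_def P_def)
  then have "descending_zeros (H 0) {a..b} k"
    unfolding descending_zeros_def using yin ydesc by (intro exI[of _ y]) auto
  then obtain \<xi> where "\<xi> \<in> {a..b}" "H k \<xi> = 0"
    using rolle_iterated[where H=H, OF Hderiv] by blast
  then show ?thesis by (auto simp: H_def P_def higher_pderiv_interpolant)
qed

lemma divdiff_nonneg:
  fixes D :: "nat \<Rightarrow> real \<Rightarrow> real" and y :: "nat \<Rightarrow> real"
  assumes D0: "\<And>t. t \<in> {a..b} \<Longrightarrow> D 0 t = f t"
    and Dderiv: "\<And>m t. m < k \<Longrightarrow> t \<in> {a..b} \<Longrightarrow>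
        (D m has_real_derivative D (Suc m) t) (at t within {a..b})"
    and Dk_nonneg: "\<And>t. t \<in> {a..b} \<Longrightarrow> D k t \<ge> 0"
    and ydesc: "\<And>i j. i < j \<Longrightarrow> j \<le> k \<Longrightarrow> y j < y i"
    and yin: "\<And>i. i \<le> k \<Longrightarrow> y i \<in> {a..b}"
  shows "divdiff f y k \<ge> 0"
proof -
  have "\<exists>\<xi>\<in>{a..b}. D k \<xi> = fact k * divdiff f y k"
    by (rule divdiff_mean_value[OF D0 Dderiv ydesc yin])
  then obtain \<xi> where "\<xi> \<in> {a..b}" "D k \<xi> = fact k * divdiff f y k" by blast
  then have "fact k * divdiff f y k \<ge> 0" using Dk_nonneg[of \<xi>] by simp
  moreover have "(0::real) < fact k" by simp
  ultimately show ?thesis by (simp add: zero_le_mult_iff)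
qed

lemma divdiff_poly_low_degree:
  fixes y :: "nat \<Rightarrow> real" and p :: "real poly"
  assumes ydesc: "\<And>i j. i < j \<Longrightarrow> j \<le> k \<Longrightarrow> y j < y i"
    and deg: "degree p < k"
  shows "divdiff (poly p) y k = 0"
proof -
  have ybounds: "y k \<le> y i \<and> y i \<le> y 0" if "i \<le> k" for i
  proof -
    have "y k \<le> y i" using ydesc[of i k] that by (cases "i < k") auto
    moreover have "y i \<le> y 0" using ydesc[of 0 i] that by (cases "0 < i") auto
    ultimately show ?thesis ..
  qed
  have pderiv_chain: "(poly ((pderiv ^^ m) p) has_real_derivative poly ((pderiv ^^ Suc m) p) t)
      (at t within {y k..y 0})" for m t
    by (simp add: has_field_derivative_at_within poly_DERIV)
  have "\<exists>\<xi>\<in>{y k..y 0}. poly ((pderiv ^^ k) p) \<xi> = fact k * divdiff (poly p) y k"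
    by (rule divdiff_mean_value[where D="\<lambda>m. poly ((pderiv ^^ m) p)" and f="poly p"])
      (auto intro: pderiv_chain ydesc simp: ybounds simp del: funpow.simps)
  then obtain \<xi> where "poly ((pderiv ^^ k) p) \<xi> = fact k * divdiff (poly p) y k" by blast
  moreover have "(pderiv ^^ k) p = 0"
    using higher_pderiv_degree_le[of p k] deg by (simp add: coeff_eq_0)
  ultimately show ?thesis by simp
qed

lemma moments_annihilate_poly:
  fixes x w :: "nat \<Rightarrow> real" and p :: "real poly"
  assumes moments: "\<And>j. j < k \<Longrightarrow> (\<Sum>i\<in>A. w i * x i ^ j) = 0" and deg: "degree p < k"
  shows "(\<Sum>i\<in>A. w i * poly p (x i)) = 0"
proof -
  have "(\<Sum>i\<in>A. w i * poly p (x i)) = (\<Sum>i\<in>A. \<Sum>j\<le>degree p. coeff p j * (w i * x i ^ j))"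
    unfolding poly_altdef by (simp add: sum_distrib_left mult.left_commute)
  also have "\<dots> = (\<Sum>j\<le>degree p. coeff p j * (\<Sum>i\<in>A. w i * x i ^ j))"
    by (subst sum.swap) (simp add: sum_distrib_left)
  also have "\<dots> = 0" using moments deg by simp
  finally show ?thesis .
qed

(* With at most k distinct nodes, vanishing moments of order < k force zero weights:
   test against the polynomial vanishing at all nodes except i. *)
lemma moments_few_nodes_weights_vanish:
  fixes x w :: "nat \<Rightarrow> real"
  assumes A: "finite A" "card A \<le> k" and inj: "inj_on x A"
    and moments: "\<And>j. j < k \<Longrightarrow> (\<Sum>i\<in>A. w i * x i ^ j) = 0"
    and i: "i \<in> A"
  shows "w i = 0"
proof -
  define p where "p = (\<Prod>l\<in>A-{i}. [:- x l, 1:])"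
  have poly_p: "poly p t = (\<Prod>l\<in>A-{i}. t - x l)" for t
    unfolding p_def poly_prod by simp
  have "degree p = card A - 1"
    unfolding p_def using A i by (subst degree_prod_eq_sum_degree) auto
  then have "degree p < k" using A i card_gt_0_iff[of A] by auto
  then have "0 = (\<Sum>m\<in>A. w m * poly p (x m))"
    using moments_annihilate_poly[OF moments] by simp
  also have "\<dots> = w i * poly p (x i) + (\<Sum>m\<in>A-{i}. w m * poly p (x m))"
    using A i by (simp add: sum.remove)
  also have "(\<Sum>m\<in>A-{i}. w m * poly p (x m)) = 0"
    using A by (intro sum.neutral) (auto simp: poly_p intro!: prod_zero)
  finally have "w i * (\<Prod>l\<in>A-{i}. x i - x l) = 0" by (simp add: poly_p)
  moreover have "(\<Prod>l\<in>A-{i}. x i - x l) \<noteq> 0"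
    using A inj i by (auto simp: inj_on_def)
  ultimately show ?thesis by simp
qed

(* Peeling the first node: c = peel_mass is the multiple of divdiff(-, x_1..x_{k+1}) whose
   weight at x_1 equals w_1, and peel_weights are the remaining weights, indexed so that
   peel_weights i sits at the node x_(i+1). *)
definition peel_mass :: "(nat \<Rightarrow> real) \<Rightarrow> (nat \<Rightarrow> real) \<Rightarrow> nat \<Rightarrow> real" where
  "peel_mass x w k = w 1 * node_prod (\<lambda>r. x (Suc r)) k 0"

definition peel_weights :: "(nat \<Rightarrow> real) \<Rightarrow> (nat \<Rightarrow> real) \<Rightarrow> nat \<Rightarrow> nat \<Rightarrow> real" where
  "peel_weights x w k i =
     w (Suc i) - (if i \<le> k then peel_mass x w k / node_prod (\<lambda>r. x (Suc r)) k i else 0)"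

lemma peel_identity:
  fixes x w :: "nat \<Rightarrow> real" and g :: "real \<Rightarrow> real"
  assumes kN: "k \<le> N" and nz: "node_prod (\<lambda>r. x (Suc r)) k 0 \<noteq> 0"
  shows "(\<Sum>i=1..Suc N. w i * g (x i)) =
    (\<Sum>i=1..N. peel_weights x w k i * g (x (Suc i))) + peel_mass x w k * divdiff g (\<lambda>r. x (Suc r)) k"
proof -
  define y where "y = (\<lambda>r. x (Suc r))"
  define e where "e r = (if r \<le> k then peel_mass x w k / node_prod y k r else 0)" for r
  have e0: "e 0 = w 1" using nz by (simp add: e_def peel_mass_def y_def)
  have "peel_mass x w k * divdiff g y k = (\<Sum>r=0..k. e r * g (y r))"
    unfolding divdiff_def e_def sum_distrib_left by simp
  also have "\<dots> = (\<Sum>r=0..N. e r * g (y r))"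
    using kN by (intro sum.mono_neutral_left) (auto simp: e_def)
  also have "\<dots> = w 1 * g (x 1) + (\<Sum>r=1..N. e r * g (y r))"
    by (simp add: sum.atLeast_Suc_atMost e0 y_def)
  finally have mass: "peel_mass x w k * divdiff g y k = w 1 * g (x 1) + (\<Sum>r=1..N. e r * g (y r))" .
  have "(\<Sum>i=1..Suc N. w i * g (x i)) = w 1 * g (x 1) + (\<Sum>i=Suc 1..Suc N. w i * g (x i))"
    by (rule sum.atLeast_Suc_atMost) simp
  also have "(\<Sum>i=Suc 1..Suc N. w i * g (x i)) = (\<Sum>r=1..N. w (Suc r) * g (y r))"
    unfolding sum.shift_bounds_cl_Suc_ivl y_def ..
  also have "(\<Sum>r=1..N. w (Suc r) * g (y r)) =
      (\<Sum>r=1..N. peel_weights x w k r * g (y r)) + (\<Sum>r=1..N. e r * g (y r))"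
    unfolding peel_weights_def e_def y_def by (simp add: sum.distrib[symmetric] algebra_simps)
  finally show ?thesis using mass by (simp add: y_def)
qed

(* The denominator at the first node, split as in the partial-sum condition for j = 1. *)
lemma node_prod_first:
  fixes x :: "nat \<Rightarrow> real"
  assumes "k \<ge> 1"
  shows "node_prod (\<lambda>r. x (Suc r)) k 0 = (\<Prod>m=1..k-1. x 1 - x (1 + m)) * (x 1 - x (k + 1))"
proof -
  have "{0..k} - {0} = insert k {1..k-1}" using assms by auto
  then show ?thesis using assms unfolding node_prod_def by (simp add: mult.commute)
qed

lemma later_node_factor_vanishes:
  fixes x :: "nat \<Rightarrow> real"
  assumes "j < i" "i < j + k"
  shows "(\<Prod>m=1..k-1. x i - x (j + m)) = 0"
proof (rule prod_zero)
  show "\<exists>m\<in>{1..k-1}. x i - x (j + m) = 0" using assms by (intro bexI[of _ "i - j"]) auto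
qed simp

lemma shifted_nodes:
  fixes x :: "nat \<Rightarrow> real"
  assumes kn: "k \<le> n"
    and decr: "\<And>i j. 1 \<le> i \<Longrightarrow> i < j \<Longrightarrow> j \<le> Suc n \<Longrightarrow> x j < x i"
  shows "\<And>r s. r < s \<Longrightarrow> s \<le> k \<Longrightarrow> x (Suc s) < x (Suc r)"
    and "node_prod (\<lambda>r. x (Suc r)) k 0 \<noteq> 0"
proof -
  show desc: "\<And>r s. r < s \<Longrightarrow> s \<le> k \<Longrightarrow> x (Suc s) < x (Suc r)" using decr kn by auto
  have "inj_on (\<lambda>r. x (Suc r)) {0..k}" by (rule descending_inj_on) (use desc in auto)
  then show "node_prod (\<lambda>r. x (Suc r)) k 0 \<noteq> 0" by (simp add: node_prod_nonzero)
qed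

(* The peeled weights inherit vanishing moments, since divdiff kills t^j for j < k. *)
lemma peel_moments:
  fixes x w :: "nat \<Rightarrow> real"
  assumes kn: "k \<le> n"
    and decr: "\<And>i j. 1 \<le> i \<Longrightarrow> i < j \<Longrightarrow> j \<le> Suc n \<Longrightarrow> x j < x i"
    and moments: "\<And>j. j < k \<Longrightarrow> (\<Sum>i=1..Suc n. w i * x i ^ j) = 0"
    and j: "j < k"
  shows "(\<Sum>i=1..n. peel_weights x w k i * x (Suc i) ^ j) = 0"
proof -
  note ydesc = shifted_nodes(1)[where x=x, OF kn decr]
    and nz = shifted_nodes(2)[where x=x, OF kn decr]
  have power: "(\<lambda>t::real. t ^ j) = poly (monom 1 j)" by (simp add: fun_eq_iff poly_monom)
  have "degree (monom (1::real) j) < k" using j degree_monom_le[of "1::real" j] by linarith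
  with ydesc have "divdiff (poly (monom 1 j)) (\<lambda>r. x (Suc r)) k = 0"
    by (intro divdiff_poly_low_degree)
  then have "divdiff (\<lambda>t. t ^ j) (\<lambda>r. x (Suc r)) k = 0" by (simp only: power)
  then show ?thesis
    using peel_identity[OF kn nz, where w=w and g="\<lambda>t. t ^ j"] moments[OF j] by simp
qed

(* The peeled weights inherit nonnegative partial sums: the test product for index j is a
   polynomial of degree k - 1 vanishing at the next k - 1 nodes, so divdiff contributes
   nothing and the old partial-sum condition for index j + 1 applies. *)
lemma peel_partial_sums:
  fixes x w :: "nat \<Rightarrow> real"
  assumes k_pos: "k \<ge> 1" and kn: "k \<le> n"
    and decr: "\<And>i j. 1 \<le> i \<Longrightarrow> i < j \<Longrightarrow> j \<le> Suc n \<Longrightarrow> x j < x i"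
    and partial: "\<And>j. 1 \<le> j \<Longrightarrow> j \<le> Suc n - k \<Longrightarrow>
        (\<Sum>i=1..j. w i * (\<Prod>m=1..k-1. x i - x (j + m))) \<ge> 0"
    and j: "1 \<le> j" "j \<le> n - k"
  shows "(\<Sum>i=1..j. peel_weights x w k i * (\<Prod>m=1..k-1. x (Suc i) - x (Suc (j + m)))) \<ge> 0"
proof -
  define q where "q = (\<Prod>m=1..k-1. [:- x (Suc j + m), 1:])"
  have poly_q: "poly q t = (\<Prod>m=1..k-1. t - x (Suc j + m))" for t
    unfolding q_def poly_prod by simp
  have "degree q < k" unfolding q_def using k_pos by (subst degree_prod_eq_sum_degree) auto
  with shifted_nodes(1)[where x=x, OF kn decr] have dd: "divdiff (poly q) (\<lambda>r. x (Suc r)) k = 0"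
    by (intro divdiff_poly_low_degree)
  note nz = shifted_nodes(2)[where x=x, OF kn decr]
  define N where "N = j + k - 1"
  have kN: "k \<le> N" using j unfolding N_def by simp
  have "(\<Sum>i=1..Suc j. w i * poly q (x i)) = (\<Sum>i=1..Suc N. w i * poly q (x i))"
  proof (rule sum.mono_neutral_left)
    show "\<forall>i\<in>{1..Suc N} - {1..Suc j}. w i * poly q (x i) = 0"
    proof
      fix i assume "i \<in> {1..Suc N} - {1..Suc j}"
      then have "poly q (x i) = 0"
        unfolding poly_q using k_pos by (intro later_node_factor_vanishes) (auto simp: N_def)
      then show "w i * poly q (x i) = 0" by simp
    qed
  qed (use k_pos in \<open>auto simp: N_def\<close>)
  also have "\<dots> = (\<Sum>i=1..N. peel_weights x w k i * poly q (x (Suc i)))"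
    using peel_identity[OF kN nz, where w=w and g="poly q"] dd by simp
  also have "\<dots> = (\<Sum>i=1..j. peel_weights x w k i * poly q (x (Suc i)))"
  proof (rule sum.mono_neutral_right)
    show "\<forall>i\<in>{1..N} - {1..j}. peel_weights x w k i * poly q (x (Suc i)) = 0"
    proof
      fix i assume "i \<in> {1..N} - {1..j}"
      then have "poly q (x (Suc i)) = 0"
        unfolding poly_q using k_pos by (intro later_node_factor_vanishes) (auto simp: N_def)
      then show "peel_weights x w k i * poly q (x (Suc i)) = 0" by simp
    qed
  qed (use k_pos in \<open>auto simp: N_def\<close>)
  finally show ?thesis
    using partial[of "Suc j"] j by (simp add: poly_q)
qed

(* The peeled mass c is nonnegative by the partial-sum condition for j = 1. *)
lemma peel_mass_nonneg:
  fixes x w :: "nat \<Rightarrow> real"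
  assumes k_pos: "k \<ge> 1" and kn: "k \<le> n"
    and decr: "\<And>i j. 1 \<le> i \<Longrightarrow> i < j \<Longrightarrow> j \<le> Suc n \<Longrightarrow> x j < x i"
    and partial: "\<And>j. 1 \<le> j \<Longrightarrow> j \<le> Suc n - k \<Longrightarrow>
        (\<Sum>i=1..j. w i * (\<Prod>m=1..k-1. x i - x (j + m))) \<ge> 0"
  shows "peel_mass x w k \<ge> 0"
proof -
  have "w 1 * (\<Prod>m=1..k-1. x 1 - x (1 + m)) \<ge> 0" using partial[of 1] kn by simp
  moreover have "x 1 - x (k + 1) > 0" using decr[of 1 "k + 1"] k_pos kn by simp
  ultimately show ?thesis
    unfolding peel_mass_def node_prod_first[OF k_pos] by (simp add: mult.assoc[symmetric])
qed

theorem mainTheorem10: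
  fixes k n :: nat and a b :: real and x w :: "nat \<Rightarrow> real"
    and f :: "real \<Rightarrow> real" and D :: "nat \<Rightarrow> real \<Rightarrow> real"
  assumes k_pos: "k \<ge> 1"
    and decr: "\<And>i j. 1 \<le> i \<Longrightarrow> i < j \<Longrightarrow> j \<le> n \<Longrightarrow> x j < x i"
    and range: "\<And>i. 1 \<le> i \<Longrightarrow> i \<le> n \<Longrightarrow> x i \<in> {a..b}"
    and moments: "\<And>j. j < k \<Longrightarrow> (\<Sum>i=1..n. w i * x i ^ j) = 0"
    and partial: "\<And>j. 1 \<le> j \<Longrightarrow> j \<le> n - k \<Longrightarrow>
        (\<Sum>i=1..j. w i * (\<Prod>m=1..k-1. x i - x (j + m))) \<ge> 0"
    and D0: "\<And>t. t \<in> {a..b} \<Longrightarrow> D 0 t = f t"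
    and Dderiv: "\<And>m t. m < k \<Longrightarrow> t \<in> {a..b} \<Longrightarrow>
        (D m has_real_derivative D (Suc m) t) (at t within {a..b})"
    and Dk_nonneg: "\<And>t. t \<in> {a..b} \<Longrightarrow> D k t \<ge> 0"
  shows "(\<Sum>i=1..n. w i * f (x i)) \<ge> 0"
  using decr range moments partial
proof (induction n arbitrary: x w)
  case 0
  then show ?case by simp
next
  case (Suc n)
  note decr = Suc.prems(1) and range = Suc.prems(2)
    and moments = Suc.prems(3) and partial = Suc.prems(4)
  show ?case
  proof (cases "Suc n \<le> k")
    case True
    have "inj_on x {1..Suc n}" by (rule descending_inj_on) (use decr in auto)
    then have "w i = 0" if "i \<in> {1..Suc n}" for i
      using moments_few_nodes_weights_vanish[OF _ _ _ moments that] True by simp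
    then show ?thesis by simp
  next
    case False
    then have kn: "k \<le> n" by simp
    note nodes_desc = shifted_nodes(1)[where x=x, OF kn decr]
    have decomposition: "(\<Sum>i=1..Suc n. w i * f (x i)) =
        (\<Sum>i=1..n. peel_weights x w k i * f (x (Suc i))) + peel_mass x w k * divdiff f (\<lambda>r. x (Suc r)) k"
      by (rule peel_identity[OF kn shifted_nodes(2)[where x=x, OF kn decr]])
    have "(\<Sum>i=1..n. peel_weights x w k i * f (x (Suc i))) \<ge> 0"
    proof (rule Suc.IH)
      fix i j :: nat assume "1 \<le> i" "i < j" "j \<le> n"
      then show "x (Suc j) < x (Suc i)" using decr by simp
    next
      fix i :: nat assume "1 \<le> i" "i \<le> n"
      then show "x (Suc i) \<in> {a..b}" using range by simp
    qed (use peel_moments[OF kn decr moments] peel_partial_sums[OF k_pos kn decr partial] in auto)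
    moreover have "peel_mass x w k \<ge> 0" by (rule peel_mass_nonneg[OF k_pos kn decr partial])
    moreover have "divdiff f (\<lambda>r. x (Suc r)) k \<ge> 0"
      by (rule divdiff_nonneg[OF D0 Dderiv Dk_nonneg]) (use nodes_desc range kn in auto)
    ultimately show ?thesis unfolding decomposition by simp
  qed
qed

end
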